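(* Let $N\ge2$ and ${\bm{p}}\in\Delta_K$ with $p_1\ge p_2\ge\dots\ge p_K>0$. Let ${\bm{q}}^*(N)$ be the minimizer over ${\bm{q}}\in\Delta_K$ of $\sum_kp_k(1-q_k)^N$, let $\beta_N>0$ be such that $q_k^*(N)=\max\{0,1-\beta_Np_k^{-1/(N-1)}\}$ for all $k$, and let $K_N:=\max\{k\in[K]:q_k^*(N)\neq0\}$. Then $$\beta_N=\frac{K_N-1}{\sum_{k=1}^{K_N}p_k^{-1/(N-1)}}\in\left[p_{K_N+1}^{1/(N-1)},\,p_{K_N}^{1/(N-1)}\right),$$ $$K_N=\max\{l\mid f_N(l)<1\},\quad\text{where } f_N(l):=\sum_{k=1}^{l-1}\left(1-\left(\frac{p_l}{p_k}\right)^{1/(N-1)}\right),$$ with the convention $p_{K+1}=0$.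
   Context: $\Delta_K=\{{\bm{r}}\in\mathbb{R}^K:{\bm{r}}\ge0,\ \sum_kr_k=1\}$. The objective is the expected test loss of the memorization model. *)

theory Defs
  imports Complex_Main
begin

definition simplex :: "nat \<Rightarrow> (nat \<Rightarrow> real) set" where
  "simplex K = {r. (\<forall>k\<in>{1..K}. r k \<ge> 0) \<and> (\<Sum>k=1..K. r k) = 1}"

definition mem_loss :: "nat \<Rightarrow> nat \<Rightarrow> (nat \<Rightarrow> real) \<Rightarrow> (nat \<Rightarrow> real) \<Rightarrow> real" where
  "mem_loss K N p q = (\<Sum>k=1..K. p k * (1 - q k) ^ N)"

definition pext :: "nat \<Rightarrow> (nat \<Rightarrow> real) \<Rightarrow> nat \<Rightarrow> real" where
  "pext K p k = (if k \<le> K then p k else 0)"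

definition fN :: "nat \<Rightarrow> (nat \<Rightarrow> real) \<Rightarrow> nat \<Rightarrow> real" where
  "fN N p l = (\<Sum>k=1..l-1. 1 - (p l / p k) powr (1 / (real N - 1)))"

end

theory Submission
  imports Defs
begin

text \<open>
  Write \<open>s\<^sub>k = p\<^sub>k powr (1/(N-1))\<close>, so that \<open>q\<^sub>k = max 0 (1 - \<beta>/s\<^sub>k)\<close>. The total
  mass \<open>h(t) = \<Sum>\<^sub>k max 0 (1 - t/s\<^sub>k)\<close> is antitone in the level \<open>t\<close>, and strictly
  decreasing while some \<open>s\<^sub>k\<close> exceeds \<open>t\<close>; normalisation of \<open>q\<close> says \<open>h(\<beta>) = 1\<close>.
  Since the \<open>s\<^sub>k\<close> decrease, the support of \<open>q\<close> is the initial segment \<open>{1..K\<^sub>N}\<close> of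
  indices with \<open>\<beta> < s\<^sub>k\<close>, and \<open>h(\<beta>) = 1\<close> on it is the formula for \<open>\<beta>\<close>.
  Moreover \<open>f\<^sub>N(l) = h(s\<^sub>l)\<close>, so \<open>f\<^sub>N(l) < 1 = h(\<beta>)\<close> holds exactly when \<open>\<beta> < s\<^sub>l\<close>.
\<close>

definition clipped_mass :: "nat \<Rightarrow> (nat \<Rightarrow> real) \<Rightarrow> real \<Rightarrow> real" where
  "clipped_mass K s t = (\<Sum>k=1..K. max 0 (1 - t / s k))"

lemma clip_antimono:
  fixes c t t' :: real
  assumes "0 < c" and "t \<le> t'"
  shows "max 0 (1 - t' / c) \<le> max 0 (1 - t / c)"
  using divide_right_mono[OF \<open>t \<le> t'\<close>, of c] assms by simp

lemma clip_eq_zero_iff: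
  fixes c t :: real
  assumes "0 < c"
  shows "max 0 (1 - t / c) = 0 \<longleftrightarrow> c \<le> t"
  using assms by (simp add: max_def field_simps)

lemma clipped_mass_antimono:
  assumes pos: "\<And>k. k \<in> {1..K} \<Longrightarrow> 0 < s k" and "t \<le> t'"
  shows "clipped_mass K s t' \<le> clipped_mass K s t"
  unfolding clipped_mass_def using pos \<open>t \<le> t'\<close> by (intro sum_mono clip_antimono)

lemma clipped_mass_strict_antimono:
  assumes pos: "\<And>k. k \<in> {1..K} \<Longrightarrow> 0 < s k"
    and l: "l \<in> {1..K}" and "t < s l" and "t < t'"
  shows "clipped_mass K s t' < clipped_mass K s t"
  unfolding clipped_mass_def
proof (rule sum_strict_mono_ex1)
  show "\<forall>k\<in>{1..K}. max 0 (1 - t' / s k) \<le> max 0 (1 - t / s k)"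
    using pos \<open>t < t'\<close> by (blast intro: clip_antimono less_imp_le)
  have "t / s l < 1" and "t / s l < t' / s l"
    using pos[OF l] \<open>t < s l\<close> \<open>t < t'\<close> by (simp_all add: divide_strict_right_mono)
  then have "max 0 (1 - t' / s l) < max 0 (1 - t / s l)" by linarith
  then show "\<exists>k\<in>{1..K}. max 0 (1 - t' / s k) < max 0 (1 - t / s k)" using l by blast
qed simp

lemma clipped_mass_at_weight_less_iff:
  assumes pos: "\<And>k. k \<in> {1..K} \<Longrightarrow> 0 < s k" and l: "l \<in> {1..K}"
  shows "clipped_mass K s (s l) < clipped_mass K s t \<longleftrightarrow> t < s l"
proof (cases "t < s l")
  case True
  then show ?thesis using clipped_mass_strict_antimono[of K s l t "s l", OF pos l] by simp
next
  case False
  then show ?thesis using clipped_mass_antimono[of K s "s l" t, OF pos] by simp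
qed

lemma clipped_mass_at_weight:
  assumes pos: "\<And>k. k \<in> {1..K} \<Longrightarrow> 0 < s k"
    and antitone: "\<And>i j. 1 \<le> i \<Longrightarrow> i \<le> j \<Longrightarrow> j \<le> K \<Longrightarrow> s j \<le> s i"
    and l: "l \<in> {1..K}"
  shows "clipped_mass K s (s l) = (\<Sum>k=1..l-1. 1 - s l / s k)"
proof -
  have split: "{1..K} = {1..l-1} \<union> {l..K}" using l by auto
  have "max 0 (1 - s l / s k) = 1 - s l / s k" if "k \<in> {1..l-1}" for k
  proof -
    have "0 < s k" "s l \<le> s k" using that l pos[of k] antitone[of k l] by auto
    then show ?thesis by simp
  qed
  moreover have "max 0 (1 - s l / s k) = 0" if "k \<in> {l..K}" for k
  proof -
    have "0 < s k" "s k \<le> s l" using that l pos[of k] antitone[of l k] by auto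
    then show ?thesis by (simp add: field_simps)
  qed
  ultimately show ?thesis
    unfolding clipped_mass_def split by (simp add: sum.union_disjoint)
qed

lemma clipped_mass_eq_sum_superlevel:
  assumes pos: "\<And>k. k \<in> {1..K} \<Longrightarrow> 0 < s k"
  shows "clipped_mass K s t = (\<Sum>k\<in>{k\<in>{1..K}. t < s k}. 1 - t / s k)"
proof -
  have "max 0 (1 - t / s k) = (if t < s k then 1 - t / s k else 0)" if "k \<in> {1..K}" for k
    using pos[OF that] by (simp add: max_def field_simps)
  then show ?thesis
    unfolding clipped_mass_def sum.inter_filter[OF finite_atLeastAtMost] by simp
qed

lemma antitone_superlevel_eq_initial_segment:
  fixes s :: "nat \<Rightarrow> real"
  assumes antitone: "\<And>i j. 1 \<le> i \<Longrightarrow> i \<le> j \<Longrightarrow> j \<le> K \<Longrightarrow> s j \<le> s i"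
    and "k\<^sub>0 \<in> {1..K}" and "t < s k\<^sub>0"
  shows "{k\<in>{1..K}. t < s k} = {1..Max {k\<in>{1..K}. t < s k}}"
    (is "?A = {1..Max ?A}")
proof (intro set_eqI iffI)
  fix k assume "k \<in> ?A"
  then show "k \<in> {1..Max ?A}" by simp
next
  have "Max ?A \<in> ?A" using assms(2,3) by (intro Max_in) auto
  moreover fix k assume "k \<in> {1..Max ?A}"
  ultimately show "k \<in> ?A" using antitone[of k "Max ?A"] by auto
qed

lemma antitone_powr:
  fixes p :: "nat \<Rightarrow> real"
  assumes "0 \<le> a" and pos: "\<And>k. k \<in> {1..K} \<Longrightarrow> 0 < p k"
    and antitone: "\<And>i j. 1 \<le> i \<Longrightarrow> i \<le> j \<Longrightarrow> j \<le> K \<Longrightarrow> p j \<le> p i"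
    and "1 \<le> i" "i \<le> j" "j \<le> K"
  shows "p j powr a \<le> p i powr a"
proof (rule powr_mono2)
  show "0 \<le> p j" using pos[of j] \<open>1 \<le> i\<close> \<open>i \<le> j\<close> \<open>j \<le> K\<close> by simp
qed (use assms in auto)

lemma fN_eq_clipped_mass:
  assumes "N \<ge> 2" and pos: "\<And>k. k \<in> {1..K} \<Longrightarrow> 0 < p k"
    and antitone: "\<And>i j. 1 \<le> i \<Longrightarrow> i \<le> j \<Longrightarrow> j \<le> K \<Longrightarrow> p j \<le> p i"
    and l: "l \<in> {1..K}"
  shows "fN N p l
    = clipped_mass K (\<lambda>k. p k powr (1 / (real N - 1))) (p l powr (1 / (real N - 1)))"
    (is "_ = clipped_mass K ?s (?s l)")
proof -
  have "fN N p l = (\<Sum>k=1..l-1. 1 - ?s l / ?s k)"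
    unfolding fN_def using l pos by (intro sum.cong refl) (simp add: powr_divide)
  also have "\<dots> = clipped_mass K ?s (?s l)"
  proof (rule clipped_mass_at_weight[THEN sym])
    show "0 < ?s k" if "k \<in> {1..K}" for k
      using pos[OF that] by simp
    show "\<And>i j. 1 \<le> i \<Longrightarrow> i \<le> j \<Longrightarrow> j \<le> K \<Longrightarrow> ?s j \<le> ?s i"
      using \<open>N \<ge> 2\<close> pos antitone by (intro antitone_powr) auto
  qed (rule l)
  finally show ?thesis .
qed

locale water_filling =
  fixes K :: nat and s q :: "nat \<Rightarrow> real" and \<beta> :: real
  assumes pos: "\<And>k. k \<in> {1..K} \<Longrightarrow> 0 < s k"
    and antitone: "\<And>i j. 1 \<le> i \<Longrightarrow> i \<le> j \<Longrightarrow> j \<le> K \<Longrightarrow> s j \<le> s i"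
    and threshold: "\<And>k. k \<in> {1..K} \<Longrightarrow> q k = max 0 (1 - \<beta> / s k)"
    and sum_one: "(\<Sum>k=1..K. q k) = 1"
begin

lemma mass_one: "clipped_mass K s \<beta> = 1"
  using sum_one threshold by (simp add: clipped_mass_def)

lemma support_eq: "{k\<in>{1..K}. q k \<noteq> 0} = {k\<in>{1..K}. \<beta> < s k}"
  using threshold clip_eq_zero_iff[OF pos] by fastforce

definition active_count :: nat where
  "active_count = Max {k\<in>{1..K}. q k \<noteq> 0}"

lemma active_nonempty: "\<exists>k\<in>{1..K}. \<beta> < s k"
proof (rule ccontr)
  assume "\<not> (\<exists>k\<in>{1..K}. \<beta> < s k)"
  then have no_active: "{k\<in>{1..K}. \<beta> < s k} = {}" by auto
  have "clipped_mass K s \<beta> = (\<Sum>k\<in>{k\<in>{1..K}. \<beta> < s k}. 1 - \<beta> / s k)"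
    using pos by (rule clipped_mass_eq_sum_superlevel)
  also have "\<dots> = 0" by (simp only: no_active sum.empty)
  finally show False using mass_one by simp
qed

lemma active_eq_initial_segment: "{k\<in>{1..K}. \<beta> < s k} = {1..active_count}"
  using active_nonempty antitone_superlevel_eq_initial_segment[of K s, OF antitone]
  unfolding active_count_def support_eq by blast

lemma active_iff:
  assumes "k \<in> {1..K}"
  shows "\<beta> < s k \<longleftrightarrow> k \<le> active_count"
proof -
  have "k \<in> {k\<in>{1..K}. \<beta> < s k} \<longleftrightarrow> k \<in> {1..active_count}"
    by (simp only: active_eq_initial_segment)
  then show ?thesis using assms by simp
qed

lemma active_count_bounds: "1 \<le> active_count" "active_count \<le> K"
proof -
  obtain k where "k \<in> {1..K}" "\<beta> < s k" using active_nonempty by blast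
  then have "k \<in> {1..active_count}" using active_eq_initial_segment by blast
  then have "active_count \<in> {k\<in>{1..K}. \<beta> < s k}" unfolding active_eq_initial_segment by simp
  then show "1 \<le> active_count" "active_count \<le> K" by simp_all
qed

lemma level_eq: "\<beta> = (real active_count - 1) / (\<Sum>k=1..active_count. 1 / s k)"
proof -
  have "1 = (\<Sum>k=1..active_count. 1 - \<beta> / s k)"
    using mass_one clipped_mass_eq_sum_superlevel[of K s \<beta>, OF pos] active_eq_initial_segment
    by simp
  also have "\<dots> = real active_count - \<beta> * (\<Sum>k=1..active_count. 1 / s k)"
    by (simp add: sum_subtractf sum_distrib_left)
  finally have "\<beta> * (\<Sum>k=1..active_count. 1 / s k) = real active_count - 1" by simp
  moreover have "(\<Sum>k=1..active_count. 1 / s k) > 0"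
    using active_count_bounds pos by (intro sum_pos) auto
  ultimately show ?thesis by (simp add: field_simps)
qed

lemma level_less_last_active: "\<beta> < s active_count"
  using active_iff[of active_count] active_count_bounds by simp

lemma first_inactive_le_level: "active_count < K \<Longrightarrow> s (active_count + 1) \<le> \<beta>"
  using active_iff[of "active_count + 1"] by simp

lemma clipped_mass_at_weight_less_one_eq_active:
  "{l\<in>{1..K}. clipped_mass K s (s l) < 1} = {1..active_count}"
  using clipped_mass_at_weight_less_iff[of K s _ \<beta>, OF pos] mass_one active_eq_initial_segment
  by auto

end

theorem lemmaA7:
  fixes K N :: nat and p q :: "nat \<Rightarrow> real" and \<beta> :: real and KN :: nat
  assumes N2: "N \<ge> 2"
    and p_simplex: "p \<in> simplex K"
    and p_mono: "\<And>i j. 1 \<le> i \<Longrightarrow> i \<le> j \<Longrightarrow> j \<le> K \<Longrightarrow> p j \<le> p i"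
    and p_pos: "\<And>k. k \<in> {1..K} \<Longrightarrow> p k > 0"
    and q_simplex: "q \<in> simplex K"
    and q_min: "\<And>q'. q' \<in> simplex K \<Longrightarrow> mem_loss K N p q \<le> mem_loss K N p q'"
    and beta_pos: "\<beta> > 0"
    and q_form: "\<And>k. k \<in> {1..K} \<Longrightarrow>
                   q k = max 0 (1 - \<beta> * p k powr (- 1 / (real N - 1)))"
    and KN_def: "KN = Max {k \<in> {1..K}. q k \<noteq> 0}"
  shows "\<beta> = (real KN - 1) / (\<Sum>k=1..KN. p k powr (- 1 / (real N - 1)))
         \<and> pext K p (KN + 1) powr (1 / (real N - 1)) \<le> \<beta>
         \<and> \<beta> < p KN powr (1 / (real N - 1))
         \<and> KN = Max {l \<in> {1..K}. fN N p l < 1}"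
proof -
  define s where "s k = p k powr (1 / (real N - 1))" for k
  have inv_s: "p k powr (- 1 / (real N - 1)) = 1 / s k" for k
    by (simp add: s_def powr_minus_divide)
  interpret water_filling K s q \<beta>
  proof
    show "0 < s k" if "k \<in> {1..K}" for k
      using p_pos[OF that] by (simp add: s_def)
    show "s j \<le> s i" if "1 \<le> i" "i \<le> j" "j \<le> K" for i j
      unfolding s_def using N2 p_pos p_mono that by (intro antitone_powr) auto
    show "q k = max 0 (1 - \<beta> / s k)" if "k \<in> {1..K}" for k
      using q_form[OF that] unfolding inv_s by simp
    show "(\<Sum>k=1..K. q k) = 1"
      using q_simplex by (simp add: simplex_def)
  qed
  have KN_eq: "KN = active_count"
    unfolding KN_def active_count_def ..
  have "{l \<in> {1..K}. fN N p l < 1} = {l \<in> {1..K}. clipped_mass K s (s l) < 1}"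
    using fN_eq_clipped_mass[OF N2 p_pos p_mono] unfolding s_def by auto
  also have "\<dots> = {1..KN}"
    unfolding KN_eq by (rule clipped_mass_at_weight_less_one_eq_active)
  finally have "KN = Max {l \<in> {1..K}. fN N p l < 1}"
    using active_count_bounds KN_eq by (auto intro: Max_eqI[symmetric])
  moreover have "pext K p (KN + 1) powr (1 / (real N - 1)) \<le> \<beta>"
    using first_inactive_le_level beta_pos KN_eq active_count_bounds
    by (cases "KN < K") (simp_all add: pext_def s_def)
  ultimately show ?thesis
    using level_eq level_less_last_active KN_eq unfolding inv_s by (simp add: s_def)
qed

end
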